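(* Let $N=2p$ and let $2^{-1}$ denote the inverse of $2$ modulo $2^N-1$. Then (1) $S(2)\equiv \big(1-(2^p+1)2^{-1}\big)+(2^p+1)2^{-1}\cdot\frac{2^{N}-1}{3}-2^{-1}\Big(\big(\tfrac{2}{p}\big)2^p+1\Big)G_p \pmod{2^N-1}$; (2) $G_p^2\equiv\big(\tfrac{-1}{p}\big)\Big(p-\frac{2^N-1}{3}\Big)\pmod{2^N-1}$.
   Context: Let $p$ be an odd prime and $g$ an odd integer which is a primitive root modulo $p$ and modulo $2p$. Define $D_0^{(p)}=\{g^{2k}\bmod p : 0\le k\le \frac{p-1}{2}-1\}$, $D_1^{(p)}=\{g^{2k+1}\bmod p : 0\le k\le \frac{p-1}{2}-1\}$, $D_0^{(2p)}=\{g^{2k}\bmod 2p : 0\le k\le \frac{p-1}{2}-1\}$, $D_1^{(2p)}=\{g^{2k+1}\bmod 2p : 0\le k\le \frac{p-1}{2}-1\}$, viewed as subsets of $\{0,\dots,p-1\}$ resp. $\{0,1,\dots,2p-1\}$. For $j\in\{0,1\}$ let $2D_j^{(p)}=\{2a \bmod 2p : a\in D_j^{(p)}\}$. Let $C_1=D_1^{(2p)}\cup 2D_1^{(p)}\cup\{0\}$ and $C_0=D_0^{(2p)}\cup 2D_0^{(p)}\cup\{p\}$ (these partition $\{0,\dots,2p-1\}$). The binary sequence $s$ of period $2p$ is $s_i=1$ if $i\bmod 2p\in C_1$ and $s_i=0$ otherwise, and $S(x)=\sum_{i=0}^{2p-1}s_ix^i\in\mathbb{Z}[x]$, so $S(2)=\sum_{i=0}^{2p-1}s_i2^i$.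 Here $\left(\frac{a}{p}\right)$ is the Legendre symbol, and $G_p=\sum_{a=1}^{p-1}\left(\frac{a}{p}\right)2^{2a}\bmod (2^{2p}-1)$. *)

theory Defs
  imports "HOL-Number_Theory.Number_Theory"
begin

definition D0p :: "nat \<Rightarrow> int \<Rightarrow> nat set" where
  "D0p p g = {nat ((g ^ (2*k)) mod int p) | k. k \<le> (p - 1) div 2 - 1}"

definition D1p :: "nat \<Rightarrow> int \<Rightarrow> nat set" where
  "D1p p g = {nat ((g ^ (2*k+1)) mod int p) | k. k \<le> (p - 1) div 2 - 1}"

definition D02p :: "nat \<Rightarrow> int \<Rightarrow> nat set" where
  "D02p p g = {nat ((g ^ (2*k)) mod int (2*p)) | k. k \<le> (p - 1) div 2 - 1}"

definition D12p :: "nat \<Rightarrow> int \<Rightarrow> nat set" where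
  "D12p p g = {nat ((g ^ (2*k+1)) mod int (2*p)) | k. k \<le> (p - 1) div 2 - 1}"

definition twice_mod :: "nat \<Rightarrow> nat set \<Rightarrow> nat set" where
  "twice_mod p D = {(2*a) mod (2*p) | a. a \<in> D}"

definition C1 :: "nat \<Rightarrow> int \<Rightarrow> nat set" where
  "C1 p g = D12p p g \<union> twice_mod p (D1p p g) \<union> {0}"

definition C0 :: "nat \<Rightarrow> int \<Rightarrow> nat set" where
  "C0 p g = D02p p g \<union> twice_mod p (D0p p g) \<union> {p}"

definition seq_s :: "nat \<Rightarrow> int \<Rightarrow> nat \<Rightarrow> int" where
  "seq_s p g i = (if i mod (2*p) \<in> C1 p g then 1 else 0)"

definition S2 :: "nat \<Rightarrow> int \<Rightarrow> int" where
  "S2 p g = (\<Sum>i<2*p. seq_s p g i * 2 ^ i)"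

definition Gp :: "nat \<Rightarrow> int" where
  "Gp p = (\<Sum>a=1..p-1. Legendre (int a) (int p) * 2 ^ (2*a)) mod (2 ^ (2*p) - 1)"

end

theory Submission
  imports Defs
begin

text \<open>
  Write \<open>\<chi>\<close> for the Legendre symbol modulo \<open>p\<close> and \<open>M = 2^(2p) - 1\<close>.
  Since \<open>g\<close> is a primitive root modulo \<open>p\<close>, \<open>D1p p g\<close> is the set of quadratic
  non-residues below \<open>p\<close> and \<open>D12p p g\<close> the set of their odd lifts below \<open>2p\<close>; hence for
  \<open>i < 2p\<close> we have \<open>2 s(i) = 1 - \<chi>(i') + [i = 0] - [i = p]\<close>, where \<open>i' = i/2\<close> for even
  \<open>i\<close> and \<open>i' = i\<close> for odd \<open>i\<close>. Summing against \<open>2^i\<close>, the even indices give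
  \<open>G = \<Sum>j<p. \<chi>(j) 4^j\<close>, and the odd indices give a sum which the substitution
  \<open>2j + 1 \<equiv> 2(j + (p+1)/2)\<close> turns into \<open>\<chi>(2) 2^p G\<close> modulo \<open>M\<close>; multiplying
  \<open>2 S(2)\<close> by the inverse of 2 yields the first congruence.
  As \<open>4^p \<equiv> 1\<close> modulo \<open>M\<close>, the sum \<open>G\<close> behaves like a quadratic Gauss sum:
  substituting \<open>b = a t\<close> in \<open>G^2 = \<Sum>a,b<p. \<chi>(a b) 4^(a+b)\<close> gives
  \<open>G^2 \<equiv> \<chi>(-1) (p - \<Sum>j<p. 4^j) = \<chi>(-1) (p - M/3)\<close>.
\<close>

lemma Legendre_cong:
  assumes "[a = b] (mod m)"
  shows "Legendre a m = Legendre b m"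
proof -
  have "[c = a] (mod m) \<longleftrightarrow> [c = b] (mod m)" for c
    using assms by (simp add: cong_def)
  moreover have "[a = 0] (mod m) \<longleftrightarrow> [b = 0] (mod m)"
    using assms by (simp add: cong_def)
  ultimately show ?thesis
    unfolding Legendre_def QuadRes_def by simp
qed

lemma Legendre_0 [simp]: "Legendre 0 m = 0"
  by (simp add: Legendre_def)

lemma Legendre_cases: "Legendre a m = 0 \<or> Legendre a m = 1 \<or> Legendre a m = -1"
  unfolding Legendre_def by auto

lemma Legendre_eq_0_iff: "Legendre a m = 0 \<longleftrightarrow> [a = 0] (mod m)"
  unfolding Legendre_def by auto

lemma Legendre_mult:
  assumes "prime p" "2 < p"
  shows "Legendre (a * b) (int p) = Legendre a (int p) * Legendre b (int p)"
proof -
  let ?e = "(p - 1) div 2"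
  have "[Legendre (a * b) (int p) = (a * b) ^ ?e] (mod int p)"
    by (rule euler_criterion[OF assms])
  also have "(a * b) ^ ?e = a ^ ?e * b ^ ?e"
    by (rule power_mult_distrib)
  also have "[a ^ ?e * b ^ ?e = Legendre a (int p) * Legendre b (int p)] (mod int p)"
    using euler_criterion[OF assms] by (intro cong_mult) (auto intro: cong_sym)
  txt \<open>Both sides lie in \<open>{-1, 0, 1}\<close>, so after adding 1 they are residues modulo \<open>p > 2\<close>.\<close>
  finally have cong: "[Legendre (a * b) (int p) + 1 = Legendre a (int p) * Legendre b (int p) + 1] (mod int p)"
    by (rule cong_add) simp
  have "0 \<le> Legendre (a * b) (int p) + 1" "Legendre (a * b) (int p) + 1 < int p"
    using Legendre_cases[of "a * b" "int p"] assms(2) by auto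
  moreover have "0 \<le> Legendre a (int p) * Legendre b (int p) + 1"
      "Legendre a (int p) * Legendre b (int p) + 1 < int p"
    using Legendre_cases[of a "int p"] Legendre_cases[of b "int p"] assms(2) by auto
  ultimately have "Legendre (a * b) (int p) + 1 = Legendre a (int p) * Legendre b (int p) + 1"
    using cong by (rule cong_less_imp_eq_int)
  then show ?thesis
    by simp
qed

lemma Legendre_mult_mod:
  assumes "prime p" "2 < p"
  shows "Legendre (int ((a * b) mod p)) (int p) = Legendre (int a) (int p) * Legendre (int b) (int p)"
proof -
  have "[int ((a * b) mod p) = int a * int b] (mod int p)"
    by (simp add: cong_def of_nat_mod)
  then show ?thesis
    by (simp add: Legendre_cong Legendre_mult[OF assms])
qed

lemma Legendre_1:
  assumes "1 < m"
  shows "Legendre 1 m = 1"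
proof -
  have "QuadRes m 1"
    unfolding QuadRes_def by (rule exI[of _ 1]) simp
  with assms show ?thesis
    by (simp add: Legendre_def cong_def)
qed

lemma Legendre_primroot:
  assumes "prime p" "2 < p" "residue_primroot p g"
  shows "Legendre (int g) (int p) = -1"
proof -
  let ?e = "(p - 1) div 2"
  have "coprime p g" "ord p g = p - 1"
    using assms by (auto simp: residue_primroot_def totient_prime)
  have "Legendre (int g) (int p) \<noteq> 0"
  proof
    assume "Legendre (int g) (int p) = 0"
    then have "p dvd g"
      by (simp add: Legendre_eq_0_iff cong_0_iff)
    with \<open>coprime p g\<close> \<open>2 < p\<close> show False
      using coprime_common_divisor[of p g p] by auto
  qed
  moreover have "Legendre (int g) (int p) \<noteq> 1"
  proof
    assume "Legendre (int g) (int p) = 1"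
    then have "[int g ^ ?e = 1] (mod int p)"
      using euler_criterion[OF assms(1,2), of "int g"] by (simp add: cong_sym)
    then have "[g ^ ?e = 1] (mod p)"
      using cong_int_iff[of "g ^ ?e" 1 p] by simp
    then have "ord p g dvd ?e"
      by (simp add: ord_divides')
    with \<open>ord p g = p - 1\<close> \<open>2 < p\<close> show False
      by (auto dest: dvd_imp_le)
  qed
  ultimately show ?thesis
    using Legendre_cases by blast
qed

lemma Legendre_primroot_power:
  assumes "prime p" "2 < p" "residue_primroot p g"
  shows "Legendre (int g ^ n) (int p) = (-1) ^ n"
proof (induction n)
  case 0
  show ?case using assms(2) by (simp add: Legendre_1)
next
  case (Suc n)
  then show ?case
    using Legendre_mult[OF assms(1,2), of "int g" "int g ^ n"] Legendre_primroot[OF assms] by simp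
qed

lemma nonresidues_eq_odd_powers:
  assumes "prime p" "2 < p" "residue_primroot p g"
  shows "{x. x < p \<and> Legendre (int x) (int p) = -1} = {g ^ (2 * k + 1) mod p | k. 2 * k + 1 < p - 1}"
proof (intro equalityI subsetI)
  fix x
  assume "x \<in> {x. x < p \<and> Legendre (int x) (int p) = -1}"
  then have x: "x < p" "Legendre (int x) (int p) = -1"
    by auto
  then have "0 < x"
    by (cases x) auto
  with x have "coprime p x"
    by (intro prime_imp_coprime[OF assms(1)]) (auto dest: nat_dvd_not_less)
  with x \<open>0 < x\<close> have "x \<in> totatives p"
    by (auto simp: in_totatives_iff coprime_commute)
  then obtain i where i: "i < p - 1" "x = g ^ i mod p"
    using residue_primroot_is_generator[of p g] assms
    by (auto simp: bij_betw_def totient_prime)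
  have "[int x = int g ^ i] (mod int p)"
    using i(2) by (simp add: cong_def of_nat_mod)
  then have "Legendre (int x) (int p) = (-1) ^ i"
    using Legendre_cong Legendre_primroot_power[OF assms] by simp
  with x have "odd i"
    by (auto simp: neg_one_even_power)
  then obtain k where "i = 2 * k + 1"
    by (rule oddE)
  with i show "x \<in> {g ^ (2 * k + 1) mod p | k. 2 * k + 1 < p - 1}"
    by blast
next
  fix x
  assume "x \<in> {g ^ (2 * k + 1) mod p | k. 2 * k + 1 < p - 1}"
  then obtain k where k: "x = g ^ (2 * k + 1) mod p"
    by blast
  then have "[int x = int g ^ (2 * k + 1)] (mod int p)"
    by (simp add: cong_def of_nat_mod)
  then have "Legendre (int x) (int p) = (-1) ^ (2 * k + 1)"
    unfolding Legendre_primroot_power[OF assms, symmetric] by (rule Legendre_cong)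
  moreover have "x < p"
    using k assms(2) by simp
  ultimately show "x \<in> {x. x < p \<and> Legendre (int x) (int p) = -1}"
    by simp
qed

lemma sum_affine_mod:
  fixes f :: "nat \<Rightarrow> 'a::comm_monoid_add"
  assumes "coprime k p"
  shows "(\<Sum>x<p. f ((k * x + h) mod p)) = (\<Sum>x<p. f x)"
proof (rule sum.reindex_bij_betw)
  have "inj_on (\<lambda>x. (k * x + h) mod p) {..<p}"
  proof (rule inj_onI)
    fix x y
    assume "x \<in> {..<p}" "y \<in> {..<p}" "(k * x + h) mod p = (k * y + h) mod p"
    then have "[k * x + h = k * y + h] (mod p)"
      by (simp add: cong_def)
    then have "[k * x = k * y] (mod p)"
      by (simp add: cong_add_rcancel_nat)
    with assms have "[x = y] (mod p)"
      by (simp add: cong_mult_lcancel_nat)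
    with \<open>x \<in> {..<p}\<close> \<open>y \<in> {..<p}\<close> show "x = y"
      by (simp add: cong_less_modulus_unique_nat)
  qed
  moreover have "(\<lambda>x. (k * x + h) mod p) ` {..<p} \<subseteq> {..<p}"
    by auto
  ultimately show "bij_betw (\<lambda>x. (k * x + h) mod p) {..<p} {..<p}"
    by (simp add: bij_betw_def endo_inj_surj)
qed

lemma sum_Legendre_eq_0:
  assumes "prime p" "2 < p"
  shows "(\<Sum>j<p. Legendre (int j) (int p)) = 0"
proof -
  obtain g where g: "residue_primroot p g"
    using prime_primitive_root_exists[of p] assms prime_gt_1_nat by blast
  then have "coprime g p"
    by (simp add: residue_primroot_def coprime_commute)
  have "(\<Sum>j<p. Legendre (int j) (int p)) = (\<Sum>j<p. Legendre (int ((g * j) mod p)) (int p))"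
    using sum_affine_mod[OF \<open>coprime g p\<close>, of "\<lambda>j. Legendre (int j) (int p)" 0] by simp
  also have "\<dots> = (\<Sum>j<p. Legendre (int g) (int p) * Legendre (int j) (int p))"
    by (simp add: Legendre_mult_mod[OF assms])
  also have "\<dots> = - (\<Sum>j<p. Legendre (int j) (int p))"
    by (simp add: Legendre_primroot[OF assms g] sum_negf)
  finally show ?thesis
    by simp
qed

lemma sum_lessThan_double:
  fixes f :: "nat \<Rightarrow> 'a::comm_monoid_add"
  shows "(\<Sum>i<2 * n. f i) = (\<Sum>j<n. f (2 * j) + f (2 * j + 1))"
  by (induction n) (simp_all add: sum.distrib add_ac)

lemma cong_power_mod_period:
  fixes x m :: int
  assumes "[x ^ n = 1] (mod m)"
  shows "[x ^ k = x ^ (k mod n)] (mod m)"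
proof -
  have "x ^ k = x ^ (n * (k div n) + k mod n)"
    by simp
  also have "\<dots> = (x ^ n) ^ (k div n) * x ^ (k mod n)"
    by (simp only: power_add power_mult)
  also have "[\<dots> = 1 ^ (k div n) * x ^ (k mod n)] (mod m)"
    using assms by (intro cong_mult cong_pow) auto
  finally show ?thesis
    by simp
qed

lemma sum_power_mult_cong:
  fixes x m :: int
  assumes "prime p" "[x ^ p = 1] (mod m)"
  shows "[(\<Sum>a<p. x ^ (s * a)) = (if p dvd s then int p else (\<Sum>a<p. x ^ a))] (mod m)"
proof -
  have "[(\<Sum>a<p. x ^ (s * a)) = (\<Sum>a<p. x ^ ((s * a) mod p))] (mod m)"
    using cong_power_mod_period[OF assms(2)] by (rule cong_sum)
  also have "(\<Sum>a<p. x ^ ((s * a) mod p)) = (if p dvd s then int p else (\<Sum>a<p. x ^ a))"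
  proof (cases "p dvd s")
    case False
    then have "coprime s p"
      using prime_imp_coprime[OF assms(1)] coprime_commute by blast
    with False show ?thesis
      using sum_affine_mod[OF \<open>coprime s p\<close>, of "\<lambda>a. x ^ a" 0] by simp
  qed auto
  finally show ?thesis .
qed

definition gauss_sum :: "nat \<Rightarrow> int \<Rightarrow> int" where
  "gauss_sum p x = (\<Sum>j<p. Legendre (int j) (int p) * x ^ j)"

lemma sum_Legendre_square:
  fixes f :: "nat \<Rightarrow> int"
  assumes "0 < p"
  shows "(\<Sum>a<p. Legendre (int a) (int p) ^ 2 * f a) = (\<Sum>a<p. f a) - f 0"
proof -
  have "Legendre (int a) (int p) ^ 2 = (if a = 0 then 0 else 1)" if "a < p" for a
    using that by (simp add: Legendre_def cong_0_iff nat_dvd_not_less)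
  then have "(\<Sum>a<p. Legendre (int a) (int p) ^ 2 * f a) = (\<Sum>a<p. f a - (if a = 0 then f 0 else 0))"
    by (intro sum.cong) auto
  with assms show ?thesis
    by (simp add: sum_subtractf)
qed

lemma gauss_sum_row_cong:
  assumes "prime p" "2 < p" "[x ^ p = 1] (mod m)" "a < p"
  shows "[(\<Sum>b<p. Legendre (int a) (int p) * Legendre (int b) (int p) * x ^ (a + b))
    = Legendre (int a) (int p) ^ 2 * (\<Sum>t<p. Legendre (int t) (int p) * x ^ ((1 + t) * a))] (mod m)"
proof (cases "a = 0")
  case False
  define \<chi> where "\<chi> j = Legendre (int j) (int p)" for j
  have "coprime a p"
    using False assms(4) prime_imp_coprime[OF assms(1), of a]
    by (auto simp: coprime_commute dest: nat_dvd_not_less)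
  have "(\<Sum>b<p. \<chi> a * \<chi> b * x ^ (a + b)) = (\<Sum>t<p. \<chi> a * \<chi> ((a * t) mod p) * x ^ (a + (a * t) mod p))"
    using sum_affine_mod[OF \<open>coprime a p\<close>, of "\<lambda>b. \<chi> a * \<chi> b * x ^ (a + b)" 0] by simp
  also have "[\<dots> = (\<Sum>t<p. \<chi> a * (\<chi> a * \<chi> t) * x ^ (a + a * t))] (mod m)"
  proof (rule cong_sum)
    fix t
    have "[x ^ (a + (a * t) mod p) = x ^ ((a + (a * t) mod p) mod p)] (mod m)"
      by (rule cong_power_mod_period[OF assms(3)])
    also have "(a + (a * t) mod p) mod p = (a + a * t) mod p"
      by (simp add: mod_add_right_eq)
    also have "[x ^ ((a + a * t) mod p) = x ^ (a + a * t)] (mod m)"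
      by (rule cong_sym[OF cong_power_mod_period[OF assms(3)]])
    finally have "[x ^ (a + (a * t) mod p) = x ^ (a + a * t)] (mod m)" .
    then show "[\<chi> a * \<chi> ((a * t) mod p) * x ^ (a + (a * t) mod p) = \<chi> a * (\<chi> a * \<chi> t) * x ^ (a + a * t)] (mod m)"
      unfolding \<chi>_def Legendre_mult_mod[OF assms(1,2)] by (rule cong_scalar_left)
  qed
  also have "(\<Sum>t<p. \<chi> a * (\<chi> a * \<chi> t) * x ^ (a + a * t)) = \<chi> a ^ 2 * (\<Sum>t<p. \<chi> t * x ^ ((1 + t) * a))"
    by (simp add: sum_distrib_left power2_eq_square algebra_simps)
  finally show ?thesis
    unfolding \<chi>_def .
qed simp

lemma gauss_sum_square_cong:
  assumes "prime p" "2 < p" "[x ^ p = 1] (mod m)"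
  shows "[gauss_sum p x ^ 2 = Legendre (-1) (int p) * (int p - (\<Sum>j<p. x ^ j))] (mod m)"
proof -
  define \<chi> where "\<chi> j = Legendre (int j) (int p)" for j
  define T where "T = (\<Sum>j<p. x ^ j)"
  have "gauss_sum p x ^ 2 = (\<Sum>a<p. \<Sum>b<p. \<chi> a * \<chi> b * x ^ (a + b))"
    by (simp add: gauss_sum_def \<chi>_def power2_eq_square sum_product power_add algebra_simps)
  also have "[\<dots> = (\<Sum>a<p. \<chi> a ^ 2 * (\<Sum>t<p. \<chi> t * x ^ ((1 + t) * a)))] (mod m)"
    using gauss_sum_row_cong[OF assms] unfolding \<chi>_def by (intro cong_sum) auto
  also have "(\<Sum>a<p. \<chi> a ^ 2 * (\<Sum>t<p. \<chi> t * x ^ ((1 + t) * a)))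
      = (\<Sum>t<p. \<chi> t * (\<Sum>a<p. \<chi> a ^ 2 * x ^ ((1 + t) * a)))"
    unfolding sum_distrib_left by (subst sum.swap) (simp add: mult.left_commute)
  also have "\<dots> = (\<Sum>t<p. \<chi> t * ((\<Sum>a<p. x ^ ((1 + t) * a)) - 1))"
    using assms(2) unfolding \<chi>_def by (simp add: sum_Legendre_square)
  also have "[\<dots> = (\<Sum>t<p. \<chi> t * ((if t = p - 1 then int p else T) - 1))] (mod m)"
  proof (rule cong_sum)
    fix t
    assume "t \<in> {..<p}"
    then have "p dvd 1 + t \<longleftrightarrow> t = p - 1"
      using assms(2) by (auto simp: dvd_antisym dest: dvd_imp_le)
    then show "[\<chi> t * ((\<Sum>a<p. x ^ ((1 + t) * a)) - 1) = \<chi> t * ((if t = p - 1 then int p else T) - 1)] (mod m)"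
      using sum_power_mult_cong[OF assms(1,3), of "1 + t"] unfolding T_def
      by (intro cong_mult cong_diff) auto
  qed
  also have "(\<Sum>t<p. \<chi> t * ((if t = p - 1 then int p else T) - 1))
      = (T - 1) * (\<Sum>t<p. \<chi> t) + \<chi> (p - 1) * (int p - T)"
  proof -
    have "(\<Sum>t<p. \<chi> t * ((if t = p - 1 then int p else T) - 1))
        = (\<Sum>t<p. (T - 1) * \<chi> t + (if t = p - 1 then \<chi> t * (int p - T) else 0))"
      by (intro sum.cong) (auto simp: algebra_simps)
    with assms(2) show ?thesis
      by (simp add: sum.distrib sum_distrib_left)
  qed
  also have "\<dots> = Legendre (-1) (int p) * (int p - T)"
  proof -
    have "[int (p - 1) = -1] (mod int p)"
      using assms(2) by (simp add: cong_iff_dvd_diff of_nat_diff)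
    then show ?thesis
      using sum_Legendre_eq_0[OF assms(1,2)] Legendre_cong unfolding \<chi>_def by simp
  qed
  finally show ?thesis
    unfolding T_def .
qed

text \<open>Here \<open>(p + 1) div 2\<close> is the inverse of 2 modulo \<open>p\<close>, so \<open>2 * j + 1 \<equiv> 2 * (j + (p + 1) div 2)\<close>.\<close>

lemma Legendre_odd_shift:
  assumes "prime p" "2 < p"
  shows "Legendre (int (2 * j + 1)) (int p)
    = Legendre 2 (int p) * Legendre (int ((j + (p + 1) div 2) mod p)) (int p)"
proof -
  have "odd p"
    using assms prime_odd_nat by blast
  have "2 * ((j + (p + 1) div 2) mod p) mod p = 2 * (j + (p + 1) div 2) mod p"
    by (rule mod_mult_right_eq)
  also have "2 * (j + (p + 1) div 2) = (2 * j + 1) + p"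
    using \<open>odd p\<close> by simp
  also have "((2 * j + 1) + p) mod p = (2 * j + 1) mod p"
    by (rule mod_add_self2)
  finally have "[2 * j + 1 = 2 * ((j + (p + 1) div 2) mod p)] (mod p)"
    by (simp add: cong_def)
  then have "Legendre (int (2 * j + 1)) (int p) = Legendre (int (2 * ((j + (p + 1) div 2) mod p))) (int p)"
    by (intro Legendre_cong) (simp only: cong_int_iff)
  also have "\<dots> = Legendre 2 (int p) * Legendre (int ((j + (p + 1) div 2) mod p)) (int p)"
    using Legendre_mult[OF assms, of 2] by simp
  finally show ?thesis .
qed

lemma power_odd_shift_cong:
  fixes y m :: int
  assumes "odd p" "[y ^ (2 * p) = 1] (mod m)"
  shows "[y ^ (2 * j + 1) = y ^ p * (y ^ 2) ^ ((j + (p + 1) div 2) mod p)] (mod m)"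
proof -
  let ?h = "(p + 1) div 2"
  have "[(y ^ 2) ^ ((j + ?h) mod p) = (y ^ 2) ^ (j + ?h)] (mod m)"
    using assms(2) by (intro cong_sym[OF cong_power_mod_period]) (simp add: power_mult)
  then have "[y ^ p * (y ^ 2) ^ ((j + ?h) mod p) = y ^ p * (y ^ 2) ^ (j + ?h)] (mod m)"
    by (rule cong_scalar_left)
  also have "y ^ p * (y ^ 2) ^ (j + ?h) = y ^ (p + 2 * (j + ?h))"
    by (simp add: power_add power_mult)
  also have "p + 2 * (j + ?h) = 2 * p + (2 * j + 1)"
    using assms(1) by simp
  also have "y ^ (2 * p + (2 * j + 1)) = y ^ (2 * p) * y ^ (2 * j + 1)"
    by (rule power_add)
  also have "[\<dots> = 1 * y ^ (2 * j + 1)] (mod m)"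
    by (rule cong_scalar_right[OF assms(2)])
  finally show ?thesis
    by (simp add: cong_sym_eq)
qed

lemma sum_odd_Legendre_cong:
  fixes y m :: int
  assumes "prime p" "2 < p" "[y ^ (2 * p) = 1] (mod m)"
  shows "[(\<Sum>j<p. Legendre (int (2 * j + 1)) (int p) * y ^ (2 * j + 1))
          = Legendre 2 (int p) * y ^ p * gauss_sum p (y ^ 2)] (mod m)"
proof -
  define \<chi> where "\<chi> j = Legendre (int j) (int p)" for j
  define \<sigma> where "\<sigma> j = (j + (p + 1) div 2) mod p" for j
  have "odd p"
    using assms(1,2) prime_odd_nat by blast
  have "[\<chi> (2 * j + 1) * y ^ (2 * j + 1) = Legendre 2 (int p) * \<chi> (\<sigma> j) * (y ^ p * (y ^ 2) ^ \<sigma> j)] (mod m)"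
    for j
    unfolding \<chi>_def \<sigma>_def Legendre_odd_shift[OF assms(1,2)]
    by (rule cong_scalar_left[OF power_odd_shift_cong[OF \<open>odd p\<close> assms(3)]])
  then have "[(\<Sum>j<p. \<chi> (2 * j + 1) * y ^ (2 * j + 1))
      = (\<Sum>j<p. Legendre 2 (int p) * \<chi> (\<sigma> j) * (y ^ p * (y ^ 2) ^ \<sigma> j))] (mod m)"
    by (rule cong_sum)
  also have "(\<Sum>j<p. Legendre 2 (int p) * \<chi> (\<sigma> j) * (y ^ p * (y ^ 2) ^ \<sigma> j))
      = Legendre 2 (int p) * y ^ p * (\<Sum>j<p. \<chi> (\<sigma> j) * (y ^ 2) ^ \<sigma> j)"
    by (simp add: sum_distrib_left ac_simps)
  also have "(\<Sum>j<p. \<chi> (\<sigma> j) * (y ^ 2) ^ \<sigma> j) = gauss_sum p (y ^ 2)"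
    using sum_affine_mod[of 1 p "\<lambda>j. \<chi> j * (y ^ 2) ^ j" "(p + 1) div 2"]
    by (simp add: \<sigma>_def \<chi>_def gauss_sum_def)
  finally show ?thesis
    unfolding \<chi>_def .
qed

lemma odd_cong_less_double_eq:
  fixes y z p :: nat
  assumes "odd p" "odd y" "odd z" "y < 2 * p" "z < 2 * p" "[y = z] (mod p)"
  shows "y = z"
proof -
  have "[y = z] (mod 2)"
    using assms(2,3) by (simp add: cong_def odd_iff_mod_2_eq_one)
  then have "[y = z] (mod 2 * p)"
    using assms(1,6) by (intro coprime_cong_mult_nat) auto
  with assms(4,5) show ?thesis
    by (simp add: cong_less_modulus_unique_nat)
qed

lemma odd_prime_gt_2:
  assumes "prime p" "odd p"
  shows "2 < (p::nat)"
  using assms prime_ge_2_nat[of p] by (cases "p = 2") auto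

lemma three_dvd_two_power_odd_plus_1:
  assumes "odd n"
  shows "(3::int) dvd 2 ^ n + 1"
proof -
  have "[(2::int) ^ n + 1 = (-1) ^ n + 1] (mod 3)"
    by (intro cong_add cong_pow) (simp_all add: cong_def)
  with assms show ?thesis
    by (simp add: cong_0_iff)
qed

lemma Gp_cong: "[Gp p = gauss_sum p 4] (mod (2 ^ (2 * p) - 1))"
proof -
  have "(\<Sum>a=1..p-1. Legendre (int a) (int p) * 2 ^ (2 * a)) = (\<Sum>a<p. Legendre (int a) (int p) * 4 ^ a)"
    by (rule sum.mono_neutral_cong_left) (auto simp: power_mult Suc_le_eq less_diff_conv2)
  then show ?thesis
    by (simp add: Gp_def gauss_sum_def)
qed

lemma nat_power_mod_eq:
  assumes "0 < q"
  shows "nat (a ^ n mod int q) = nat (a mod int q) ^ n mod q"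
proof -
  have "int (nat (a mod int q) ^ n mod q) = (a mod int q) ^ n mod int q"
    using assms by (simp add: of_nat_mod of_nat_power)
  also have "\<dots> = a ^ n mod int q"
    by (simp add: power_mod)
  finally show ?thesis
    by (metis nat_int)
qed

lemma odd_nat_mod_double:
  fixes a :: int
  assumes "odd a" "0 < q"
  shows "nat (a mod int (2 * q)) < 2 * q"
    and "odd (nat (a mod int (2 * q)))"
    and "int (nat (a mod int (2 * q))) mod int q = a mod int q"
proof -
  have r: "int (nat (a mod int (2 * q))) = a mod (2 * int q)"
    using assms(2) by simp
  show "nat (a mod int (2 * q)) < 2 * q"
    using assms(2) by (simp add: nat_less_iff)
  have "a mod (2 * int q) mod 2 = a mod 2"
    by (simp add: mod_mod_cancel)
  with assms(1) have "odd (a mod (2 * int q))"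
    by (simp only: odd_iff_mod_2_eq_one)
  then have "odd (int (nat (a mod int (2 * q))))"
    unfolding r .
  then show "odd (nat (a mod int (2 * q)))"
    by (simp only: even_of_nat_iff not_False_eq_True)
  show "int (nat (a mod int (2 * q))) mod int q = a mod int q"
    unfolding r by (simp add: mod_mod_cancel)
qed

lemma four_power_minus_1_eq: "(2 ^ (2 * n) - 1 :: int) = 3 * (\<Sum>j<n. 4 ^ j)"
  using power_diff_1_eq[of "4::int" n] by (simp add: power_mult)

lemma Gp_square_cong:
  assumes "prime p" "odd p"
  shows "[Gp p ^ 2 = Legendre (-1) (int p) * (int p - (2 ^ (2 * p) - 1) div 3)] (mod (2 ^ (2 * p) - 1))"
proof -
  have "[(4::int) ^ p = 1] (mod (2 ^ (2 * p) - 1))"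
    by (simp add: cong_iff_dvd_diff power_mult)
  then have "[gauss_sum p 4 ^ 2 = Legendre (-1) (int p) * (int p - (\<Sum>j<p. 4 ^ j))] (mod (2 ^ (2 * p) - 1))"
    by (rule gauss_sum_square_cong[OF assms(1) odd_prime_gt_2[OF assms]])
  then have "[gauss_sum p 4 ^ 2 = Legendre (-1) (int p) * (int p - (2 ^ (2 * p) - 1) div 3)] (mod (2 ^ (2 * p) - 1))"
    unfolding four_power_minus_1_eq[of p] by simp
  with cong_pow[OF Gp_cong[of p], of 2] show ?thesis
    by (rule cong_trans)
qed

context
  fixes p :: nat and g :: int
  assumes prime_p: "prime p" and odd_p: "odd p" and odd_g: "odd g"
    and primroot: "residue_primroot p (nat (g mod int p))"
begin

lemma p_gt_2: "2 < p"
  using prime_p odd_p by (rule odd_prime_gt_2)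

lemma p_pos: "0 < p"
  using p_gt_2 by simp

lemma odd_power_g: "odd (g ^ n)"
  using odd_g by simp

lemma D1p_eq: "D1p p g = {x. x < p \<and> Legendre (int x) (int p) = -1}"
proof -
  have "k \<le> (p - 1) div 2 - 1 \<longleftrightarrow> 2 * k + 1 < p - 1" for k
    using odd_p p_gt_2 by (auto elim!: oddE)
  then show ?thesis
    unfolding D1p_def nat_power_mod_eq[OF p_pos]
      nonresidues_eq_odd_powers[OF prime_p p_gt_2 primroot] by simp
qed

lemma D12p_eq: "D12p p g = {z. z < 2 * p \<and> odd z \<and> Legendre (int z) (int p) = -1}"
proof (intro equalityI subsetI)
  fix z
  assume "z \<in> D12p p g"
  then obtain k where k: "k \<le> (p - 1) div 2 - 1" and z: "z = nat (g ^ (2 * k + 1) mod int (2 * p))"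
    by (auto simp: D12p_def)
  have "nat (g ^ (2 * k + 1) mod int p) \<in> D1p p g"
    using k by (auto simp: D1p_def)
  then have "Legendre (int (nat (g ^ (2 * k + 1) mod int p))) (int p) = -1"
    unfolding D1p_eq mem_Collect_eq by (rule conjunct2)
  moreover have "[int z = int (nat (g ^ (2 * k + 1) mod int p))] (mod int p)"
    using odd_nat_mod_double(3)[OF odd_power_g[of "2 * k + 1"] p_pos] p_pos by (simp add: z cong_def)
  ultimately have "Legendre (int z) (int p) = -1"
    by (simp add: Legendre_cong)
  with odd_nat_mod_double(1,2)[OF odd_power_g[of "2 * k + 1"] p_pos] show "z \<in> {z. z < 2 * p \<and> odd z \<and> Legendre (int z) (int p) = -1}"
    by (simp add: z)
next
  fix z
  assume z: "z \<in> {z. z < 2 * p \<and> odd z \<and> Legendre (int z) (int p) = -1}"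
  have "[int (z mod p) = int z] (mod int p)"
    by (simp add: cong_def of_nat_mod)
  then have "z mod p \<in> D1p p g"
    using z p_gt_2 by (simp add: D1p_eq Legendre_cong)
  then obtain k where k: "k \<le> (p - 1) div 2 - 1" and zk: "z mod p = nat (g ^ (2 * k + 1) mod int p)"
    by (auto simp: D1p_def)
  define y where "y = nat (g ^ (2 * k + 1) mod int (2 * p))"
  have "int (y mod p) = int (z mod p)"
    using odd_nat_mod_double(3)[OF odd_power_g[of "2 * k + 1"] p_pos] p_pos by (simp add: y_def zk of_nat_mod)
  then have "[y = z] (mod p)"
    by (simp add: cong_def)
  then have "y = z"
    using odd_p odd_nat_mod_double(1,2)[OF odd_power_g[of "2 * k + 1"] p_pos] z unfolding y_def by (intro odd_cong_less_double_eq) auto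
  with k show "z \<in> D12p p g"
    by (auto simp: D12p_def y_def)
qed

lemma twice_mod_D1p_eq:
  "twice_mod p (D1p p g) = {y. even y \<and> y < 2 * p \<and> Legendre (int (y div 2)) (int p) = -1}"
proof (intro equalityI subsetI)
  fix y
  assume "y \<in> twice_mod p (D1p p g)"
  then show "y \<in> {y. even y \<and> y < 2 * p \<and> Legendre (int (y div 2)) (int p) = -1}"
    by (auto simp: twice_mod_def D1p_eq)
next
  fix y
  assume "y \<in> {y. even y \<and> y < 2 * p \<and> Legendre (int (y div 2)) (int p) = -1}"
  then have "y div 2 \<in> D1p p g" "y = (2 * (y div 2)) mod (2 * p)"
    by (auto simp: D1p_eq)
  then show "y \<in> twice_mod p (D1p p g)"
    unfolding twice_mod_def by blast
qed

lemma C1_iff: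
  assumes "i < 2 * p"
  shows "i \<in> C1 p g \<longleftrightarrow> i = 0 \<or> Legendre (int (if even i then i div 2 else i)) (int p) = -1"
  using assms by (auto simp: C1_def D12p_eq twice_mod_D1p_eq)

lemma Legendre_fold_eq_0_iff:
  assumes "i < 2 * p"
  shows "Legendre (int (if even i then i div 2 else i)) (int p) = 0 \<longleftrightarrow> i = 0 \<or> i = p"
proof -
  have "p dvd (if even i then i div 2 else i) \<longleftrightarrow> i = 0 \<or> i = p"
    using assms odd_p by (auto elim!: dvdE)
  then show ?thesis
    by (simp add: Legendre_eq_0_iff cong_0_iff)
qed

lemma two_seq_s:
  assumes "i < 2 * p"
  shows "2 * seq_s p g i = 1 - Legendre (int (if even i then i div 2 else i)) (int p)
    + (if i = 0 then 1 else 0) - (if i = p then 1 else 0)"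
  using assms p_gt_2 C1_iff[OF assms] Legendre_fold_eq_0_iff[OF assms]
    Legendre_cases[of "int (if even i then i div 2 else i)" "int p"]
  by (auto simp: seq_s_def)

lemma two_S2:
  "2 * S2 p g = 3 * (\<Sum>j<p. 4 ^ j) + 1 - 2 ^ p - gauss_sum p 4
    - (\<Sum>j<p. Legendre (int (2 * j + 1)) (int p) * 2 ^ (2 * j + 1))"
proof -
  define c where "c i = Legendre (int (if even i then i div 2 else i)) (int p)" for i
  have "2 * S2 p g = (\<Sum>i<2 * p. (1 - c i) * 2 ^ i + (if i = 0 then 1 else 0) - (if i = p then 2 ^ i else 0))"
    unfolding S2_def sum_distrib_left
    by (intro sum.cong) (auto simp: mult.assoc[symmetric] two_seq_s c_def algebra_simps)
  also have "\<dots> = (\<Sum>i<2 * p. (1 - c i) * 2 ^ i) + 1 - 2 ^ p"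
    using p_gt_2 by (simp add: sum.distrib sum_subtractf)
  also have "(\<Sum>i<2 * p. (1 - c i) * 2 ^ i)
      = (\<Sum>j<p. 3 * 4 ^ j - Legendre (int j) (int p) * 4 ^ j - Legendre (int (2 * j + 1)) (int p) * 2 ^ (2 * j + 1))"
  proof -
    have "(2::int) ^ (2 * j) = 4 ^ j" for j
      by (simp add: power_mult)
    then show ?thesis
      unfolding sum_lessThan_double by (intro sum.cong) (auto simp: c_def algebra_simps)
  qed
  finally show ?thesis
    by (simp add: gauss_sum_def sum_subtractf sum_distrib_left)
qed

lemma S2_cong:
  fixes u :: int
  assumes u: "[2 * u = 1] (mod (2 ^ (2 * p) - 1))"
  shows "[S2 p g = (1 - (2 ^ p + 1) * u) + (2 ^ p + 1) * u * ((2 ^ (2 * p) - 1) div 3)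
    - u * (Legendre 2 (int p) * 2 ^ p + 1) * Gp p] (mod (2 ^ (2 * p) - 1))"
proof -
  define M :: int where "M = 2 ^ (2 * p) - 1"
  define T :: int where "T = (\<Sum>j<p. 4 ^ j)"
  define P :: int where "P = 2 ^ p"
  define L where "L = Legendre 2 (int p)"
  define G where "G = gauss_sum p 4"
  define H where "H = (\<Sum>j<p. Legendre (int (2 * j + 1)) (int p) * 2 ^ (2 * j + 1))"
  have M: "M = 3 * T"
    unfolding M_def T_def by (rule four_power_minus_1_eq)
  have H: "[H = L * P * G] (mod M)"
    using sum_odd_Legendre_cong[OF prime_p p_gt_2, of 2 M]
    by (simp add: H_def L_def P_def G_def M_def cong_iff_dvd_diff)
  have "[S2 p g = 2 * u * S2 p g] (mod M)"
    using cong_scalar_right[OF u[folded M_def], of "S2 p g"] by (simp add: cong_sym_eq)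
  also have "2 * u * S2 p g = u * (3 * T + 1 - P - G - H)"
    using two_S2 by (simp add: T_def P_def G_def H_def)
  also have "[u * (3 * T + 1 - P - G - H) = u * (0 + 1 - P - G - L * P * G)] (mod M)"
    using H by (intro cong_scalar_left cong_diff cong_add) (simp_all add: M cong_0_iff)
  also have "u * (0 + 1 - P - G - L * P * G) = 2 * u - (P + 1) * u + 0 - u * (L * P + 1) * G"
    by (simp add: algebra_simps)
  also have "[\<dots> = 1 - (P + 1) * u + (P + 1) * u * T - u * (L * P + 1) * Gp p] (mod M)"
  proof (intro cong_diff cong_add cong_refl)
    show "[2 * u = 1] (mod M)"
      using u by (simp add: M_def)
    obtain c where "P + 1 = 3 * c"
      using three_dvd_two_power_odd_plus_1[OF odd_p] by (auto simp: P_def)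
    then have "(P + 1) * u * T = M * (c * u)"
      by (simp add: M algebra_simps)
    then show "[0 = (P + 1) * u * T] (mod M)"
      unfolding cong_sym_eq[of 0] cong_0_iff by (rule dvdI)
    show "[u * (L * P + 1) * G = u * (L * P + 1) * Gp p] (mod M)"
      using Gp_cong[of p] by (intro cong_scalar_left) (simp add: G_def M_def cong_sym_eq)
  qed
  finally show ?thesis
    using M by (simp add: M_def P_def L_def T_def)
qed

end

theorem lemma9:
  fixes p :: nat and g :: int and u :: int
  assumes "prime p" and "odd p" and "odd g"
    and "residue_primroot p (nat (g mod int p))"
    and "residue_primroot (2*p) (nat (g mod int (2*p)))"
    and "[2 * u = 1] (mod (2 ^ (2*p) - 1))"
  shows "[S2 p g = (1 - (2 ^ p + 1) * u) + (2 ^ p + 1) * u * ((2 ^ (2*p) - 1) div 3)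
            - u * (Legendre 2 (int p) * 2 ^ p + 1) * Gp p] (mod (2 ^ (2*p) - 1))
         \<and> [(Gp p) ^ 2 = Legendre (-1) (int p) * (int p - (2 ^ (2*p) - 1) div 3)]
            (mod (2 ^ (2*p) - 1))"
  using S2_cong[OF assms(1-4,6)] Gp_square_cong[OF assms(1,2)] by (rule conjI)

end
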